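(* Consider a pure departure process with $m\ge1$ servers, each with service rate $\mu>0$, started with $x\ge1$ customers, observed over a time interval $[0,h]$, $h>0$. Select a server that is serving a customer at time $0$, and let $\mathcal E$ be the event that this server is still serving that same customer at time $h$. Let $D$ be the total number of customers completing service during $[0,h]$. (1) If $x\le m$, then $P(\mathcal E\mid D=d)=\frac{x-d}{x}$ for $d=0,1,\dots,x$. (2) If $x\ge m+1$, then $P(\mathcal E\mid D=d)=\left(\frac{m-1}{m}\right)^d$ for $d=0,1,\dots,x-m$, and $P(\mathcal E\mid D=d)=\left(\frac{m-1}{m}\right)^{x-m}\frac{x-d}{m}$ for $d=x-m,\dots,x$.
   Context: A pure departure process with $m\ge1$ servers and service rate $\mu>0$ started from $x$ customers is a first-come-first-served queue with $m$ identical servers and unlimited waiting room, no arrivals, and initially $x$ customers, of which $\min(x,m)$ are in service and the others wait; service times are i.i.d. exponential with rate $\mu$ and independent of everything else, and a freed server immediately takes the next waiting customer (if any). *)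

theory Defs
  imports "HOL-Probability.Probability"
begin

text \<open>Pure departure process (FCFS, m servers, no arrivals), driven by the service
  requirements S i of customers i = 0, 1, ... (customer i is the i-th in line).
  Customers 0..m-1 start service at time 0.  Customer i >= m starts service at the
  (i-m+1)-th smallest departure time among customers 0..i-1 (when a server becomes
  free), and departs S i time units later.\<close>

function departure :: "nat \<Rightarrow> (nat \<Rightarrow> real) \<Rightarrow> nat \<Rightarrow> real" where
  "departure m S i =
     (if i < m then S i
      else sort (map (departure m S) [0..<i]) ! (i - m) + S i)"
  by pat_completeness auto
termination
  by (relation "Wellfounded.measure (\<lambda>(m, S, i). i)") auto

definition num_departures :: "nat \<Rightarrow> nat \<Rightarrow> real \<Rightarrow> (nat \<Rightarrow> real) \<Rightarrow> nat" where
  "num_departures m x h S = card {i. i < x \<and> departure m S i \<le> h}"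

end

theory Submission
  imports Defs
begin

text \<open>Of the \<open>k = min n m\<close> customers in service, each is equally likely to leave first, and
  at that moment the other service times are again i.i.d. exponential by memorylessness, so the
  process restarts with \<open>n - 1\<close> customers on the remaining time. Conditioning on the first
  departure gives the same recursion for \<open>P(D = d + 1)\<close> and for \<open>P(\<E>, D = d + 1)\<close>, except that
  in the latter the first departure must not free the tagged server, which removes one of the \<open>k\<close>
  equally likely terms. By induction on \<open>n\<close>, \<open>P(\<E> | D = d) = c(n, d)\<close> with \<open>c(n, 0) = 1\<close> and
  \<open>c(n, d + 1) = (k - 1) / k \<cdot> c(n - 1, d)\<close>, and unfolding this recursion gives the closed forms.\<close>

section \<open>Departure times\<close>

declare departure.simps[simp del]

lemma departure_cong:
  "(\<And>i'. i' \<le> i \<Longrightarrow> S i' = S' i') \<Longrightarrow> departure m S i = departure m S' i"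
proof (induction i rule: less_induct)
  case (less i)
  have "map (departure m S) [0..<i] = map (departure m S') [0..<i]"
    using less by (intro map_cong) auto
  moreover have "S i = S' i" using less.prems by auto
  ultimately show ?case
    by (subst (1 2) departure.simps) (simp only: if_cancel)
qed

lemma num_departures_cong:
  "(\<And>i. i < n \<Longrightarrow> S i = S' i) \<Longrightarrow> num_departures m n h S = num_departures m n h S'"
  unfolding num_departures_def
  by (intro arg_cong[where f=card] Collect_cong conj_cong refl)
     (auto intro!: departure_cong[where S=S and S'=S'] arg_cong2[where f="(\<le>)"])

lemma departure_initial: "i < m \<Longrightarrow> departure m S i = S i"
  by (simp add: departure.simps)

lemma departure_ge_initial_min:
  assumes m: "m \<ge> 1" and nonneg: "\<And>i. i < n \<Longrightarrow> S i \<ge> 0"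
    and min: "\<And>i. i < min n m \<Longrightarrow> t \<le> S i" and "i < n"
  shows "t \<le> departure m S i"
  using \<open>i < n\<close>
proof (induction i rule: less_induct)
  case (less i)
  show ?case
  proof (cases "i < m")
    case True
    then show ?thesis using less.prems min by (simp add: departure_initial)
  next
    case False
    let ?xs = "sort (map (departure m S) [0..<i])"
    have "?xs ! (i - m) \<in> set ?xs" using False m by (intro nth_mem) simp
    then obtain i' where "i' < i" "?xs ! (i - m) = departure m S i'" by auto
    with less have "t \<le> ?xs ! (i - m)" by auto
    moreover have "S i \<ge> 0" using nonneg less.prems by auto
    ultimately show ?thesis using False by (subst departure.simps) auto
  qed
qed

definition skip :: "nat \<Rightarrow> nat \<Rightarrow> nat" where
  "skip a i = (if i < a then i else Suc i)"

definition unskip :: "nat \<Rightarrow> nat \<Rightarrow> nat" where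
  "unskip a i = (if i < a then i else i - 1)"

lemma inj_skip: "inj (skip a)"
  by (auto simp: inj_on_def skip_def split: if_splits)

lemma skip_neq: "skip a i \<noteq> a"
  by (auto simp: skip_def)

lemma skip_less: "a < n \<Longrightarrow> i < n - 1 \<Longrightarrow> skip a i < n"
  by (auto simp: skip_def)

lemma skip_unskip: "i \<noteq> a \<Longrightarrow> skip a (unskip a i) = i"
  by (auto simp: skip_def unskip_def)

lemma unskip_less: "i \<noteq> a \<Longrightarrow> i < k \<Longrightarrow> a < k \<Longrightarrow> unskip a i < k - 1"
  by (auto simp: unskip_def)

lemma skip_image_lessThan: "a < n \<Longrightarrow> skip a ` {..<n - 1} = {..<n} - {a}"
proof (intro equalityI subsetI)
  fix i assume "a < n" "i \<in> {..<n} - {a}"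
  then show "i \<in> skip a ` {..<n - 1}"
    using skip_unskip unskip_less by (metis Diff_iff insertCI lessThan_iff rev_image_eqI)
qed (auto simp: skip_def)

lemma map_skip_upt:
  assumes "a \<le> i"
  shows "map (skip a) [0..<i] = [0..<a] @ [Suc a..<Suc i]"
proof -
  have "[0..<i] = [0..<a] @ [a..<i]"
    using assms by (metis le0 upt_add_eq_append le_add_diff_inverse)
  moreover have "map (skip a) [0..<a] = [0..<a]" by (auto simp: skip_def intro!: map_idI)
  moreover have "map (skip a) [a..<i] = map Suc [a..<i]" by (auto simp: skip_def intro!: map_cong)
  ultimately show ?thesis by (simp add: map_Suc_upt)
qed

lemma sort_Cons_map_add:
  fixes t :: real
  assumes "\<forall>y\<in>set ys. y \<ge> 0"
  shows "sort (t # map (\<lambda>v. v + t) ys) = t # map (\<lambda>v. v + t) (sort ys)"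
proof (rule properties_for_sort)
  show "mset (t # map (\<lambda>v. v + t) (sort ys)) = mset (t # map (\<lambda>v. v + t) ys)"
    by simp
  show "sorted (t # map (\<lambda>v. v + t) (sort ys))"
    using assms by (auto simp: sorted_map)
qed

lemma sort_map_skip:
  fixes f g :: "nat \<Rightarrow> real"
  assumes "a \<le> i" and "f a = t" and "\<And>i'. i' < i \<Longrightarrow> f (skip a i') = g i' + t"
    and "\<And>i'. i' < i \<Longrightarrow> g i' \<ge> 0"
  shows "sort (map f [0..<Suc i]) = t # map (\<lambda>v. v + t) (sort (map g [0..<i]))"
proof -
  have "[0..<Suc i] = [0..<a] @ [a..<Suc i]"
    using upt_add_eq_append[of 0 a "Suc i - a"] assms(1) by simp
  also have "[a..<Suc i] = a # [Suc a..<Suc i]"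
    using assms(1) by (simp add: upt_conv_Cons)
  finally have "[0..<Suc i] = [0..<a] @ a # [Suc a..<Suc i]" .
  then have "mset (map f [0..<Suc i]) = mset (t # map f ([0..<a] @ [Suc a..<Suc i]))"
    using assms(2) by simp
  also have "map f ([0..<a] @ [Suc a..<Suc i]) = map (\<lambda>v. v + t) (map g [0..<i])"
    unfolding map_skip_upt[OF assms(1), symmetric] using assms(3) by simp
  finally have "sort (map f [0..<Suc i]) = sort (t # map (\<lambda>v. v + t) (map g [0..<i]))"
    by (metis sorted_list_of_multiset_mset)
  also have "\<dots> = t # map (\<lambda>v. v + t) (sort (map g [0..<i]))"
    using assms(4) by (intro sort_Cons_map_add) auto
  finally show ?thesis .
qed

text \<open>When customer \<open>a\<close>, in service at time 0, departs first (at time \<open>s a\<close>), the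
  remaining customers form a departure process with \<open>n - 1\<close> customers, renumbered by
  \<open>skip a\<close>; the other \<open>k - 1\<close> customers in service have received \<open>s a\<close> units
  of service, which is subtracted from their requirements.\<close>

definition residual :: "nat \<Rightarrow> nat \<Rightarrow> nat \<Rightarrow> (nat \<Rightarrow> real) \<Rightarrow> nat \<Rightarrow> real" where
  "residual n k a s = (\<lambda>i\<in>{..<n - 1}. s (skip a i) - (if i < k - 1 then s a else 0))"

lemma residual_apply:
  "i < n - 1 \<Longrightarrow> residual n k a s i = s (skip a i) - (if i < k - 1 then s a else 0)"
  by (simp add: residual_def)

locale first_departure =
  fixes m n k a :: nat and S :: "nat \<Rightarrow> real"
  assumes m: "m \<ge> 1" and k: "k = min n m" and a: "a < k"
    and nonneg: "\<And>i. i < n \<Longrightarrow> S i \<ge> 0"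
    and argmin: "\<And>i. i < k \<Longrightarrow> S a \<le> S i"
begin

lemma departure_ge_first: "i < n \<Longrightarrow> S a \<le> departure m S i"
  using departure_ge_initial_min[OF m nonneg] argmin k by auto

lemma departure_first: "departure m S a = S a"
  using a k by (simp add: departure_initial)

lemma departure_residual:
  "i < n - 1 \<Longrightarrow> departure m (residual n k a S) i = departure m S (skip a i) - S a"
proof (induction i rule: less_induct)
  case (less i)
  let ?S' = "residual n k a S"
  show ?case
  proof (cases "i < k - 1")
    case True
    then have "i < m" "skip a i < m" using k a by (auto simp: skip_def)
    then show ?thesis using less.prems True by (simp add: departure_initial residual_apply)
  next
    case False
    then have km: "k = m" and ai: "a \<le> i" and skip: "skip a i = Suc i"
      using k a less.prems by (auto simp: skip_def)
    have S'i: "?S' i = S (Suc i)" using less.prems False skip by (simp add: residual_apply)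
    have srt: "sort (map (departure m S) [0..<Suc i]) =
        S a # map (\<lambda>v. v + S a) (sort (map (departure m ?S') [0..<i]))"
    proof (rule sort_map_skip[where f="departure m S" and g="departure m ?S'", OF ai departure_first])
      fix i' assume "i' < i"
      moreover have "skip a i' < n" using \<open>i' < i\<close> less.prems a k by (auto simp: skip_def)
      ultimately show "departure m S (skip a i') = departure m ?S' i' + S a"
        and "departure m ?S' i' \<ge> 0"
        using less.IH less.prems departure_ge_first by auto
    qed
    have "\<not> Suc i < m" using False km by auto
    then have dep: "departure m S (Suc i) = sort (map (departure m S) [0..<Suc i]) ! (Suc i - m) + S (Suc i)"
      by (subst departure.simps) (simp only: if_False)
    show ?thesis
    proof (cases "i < m")
      case True
      then show ?thesis using dep srt S'i skip by (simp add: departure_initial)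
    next
      case False
      then have "Suc i - m = Suc (i - m)" "i - m < i" using m by auto
      moreover have "departure m ?S' i = sort (map (departure m ?S') [0..<i]) ! (i - m) + S (Suc i)"
        using False S'i by (subst departure.simps) simp
      ultimately show ?thesis using dep srt skip by simp
    qed
  qed
qed

lemma residual_unskip: "j < k \<Longrightarrow> j \<noteq> a \<Longrightarrow> residual n k a S (unskip a j) = S j - S a"
  using unskip_less[of j a k] skip_unskip[of j a] a k by (simp add: residual_apply)

lemma num_departures_residual:
  "num_departures m n h S =
     (if S a \<le> h then Suc (num_departures m (n - 1) (h - S a) (residual n k a S)) else 0)"
proof (cases "S a \<le> h")
  case False
  then have "{i. i < n \<and> departure m S i \<le> h} = {}" using departure_ge_first by force
  then show ?thesis using False by (simp add: num_departures_def)
next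
  case True
  let ?D' = "{i. i < n - 1 \<and> departure m (residual n k a S) i \<le> h - S a}"
  have an: "a < n" using a k by simp
  have "{i. i < n \<and> departure m S i \<le> h} = insert a (({..<n} - {a}) \<inter> {i. departure m S i \<le> h})"
    using True an departure_first by auto
  also have "({..<n} - {a}) \<inter> {i. departure m S i \<le> h} = skip a ` {..<n - 1} \<inter> {i. departure m S i \<le> h}"
    by (simp only: skip_image_lessThan[OF an])
  also have "\<dots> = skip a ` ?D'"
    using departure_residual by auto
  finally have "{i. i < n \<and> departure m S i \<le> h} = insert a (skip a ` ?D')" .
  moreover have "a \<notin> skip a ` ?D'" by (simp add: image_iff skip_neq[symmetric])
  moreover have "card (skip a ` ?D') = card ?D'"
    by (rule card_image, rule inj_on_subset[OF inj_skip]) simp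
  ultimately show ?thesis using True by (simp add: num_departures_def)
qed

end

section \<open>Measurability\<close>

lemma sort_nth_le_iff:
  fixes xs :: "real list"
  assumes k: "k < length xs"
  shows "(sort xs ! k \<le> c) \<longleftrightarrow> Suc k \<le> length (filter (\<lambda>v. v \<le> c) xs)"
proof -
  let ?ys = "sort xs"
  have s: "sorted ?ys" by simp
  have "length (filter (\<lambda>v. v \<le> c) xs) = length (filter (\<lambda>v. v \<le> c) ?ys)"
    by (metis mset_filter mset_sort size_mset)
  also have "\<dots> = card {i. i < length ?ys \<and> ?ys ! i \<le> c}" by (rule length_filter_conv_card)
  finally have L: "length (filter (\<lambda>v. v \<le> c) xs) = card {i. i < length xs \<and> ?ys ! i \<le> c}" by simp
  show ?thesis
  proof
    assume le: "?ys ! k \<le> c"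
    have "{..k} \<subseteq> {i. i < length xs \<and> ?ys ! i \<le> c}"
    proof
      fix i assume "i \<in> {..k}"
      then have "i \<le> k" by simp
      then have "?ys ! i \<le> ?ys ! k" using s k by (simp add: sorted_nth_mono)
      then show "i \<in> {i. i < length xs \<and> ?ys ! i \<le> c}" using le k \<open>i \<le> k\<close> by auto
    qed
    then have "card {..k} \<le> card {i. i < length xs \<and> ?ys ! i \<le> c}" by (intro card_mono) auto
    then show "Suc k \<le> length (filter (\<lambda>v. v \<le> c) xs)" using L by simp
  next
    assume ge: "Suc k \<le> length (filter (\<lambda>v. v \<le> c) xs)"
    show "?ys ! k \<le> c"
    proof (rule ccontr)
      assume "\<not> ?ys ! k \<le> c"
      then have "{i. i < length xs \<and> ?ys ! i \<le> c} \<subseteq> {..<k}"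
      proof (intro subsetI)
        fix i assume nk: "\<not> ?ys ! k \<le> c" and i: "i \<in> {i. i < length xs \<and> ?ys ! i \<le> c}"
        show "i \<in> {..<k}"
        proof (rule ccontr)
          assume "i \<notin> {..<k}"
          then have "k \<le> i" by simp
          then have "?ys ! k \<le> ?ys ! i" using s i by (intro sorted_nth_mono) auto
          then show False using nk i by simp
        qed
      qed
      then have "card {i. i < length xs \<and> ?ys ! i \<le> c} \<le> k" by (metis card_lessThan card_mono finite_lessThan)
      then show False using L ge by simp
    qed
  qed
qed

lemma borel_measurable_sort_nth:
  fixes g :: "nat \<Rightarrow> 'a \<Rightarrow> real"
  assumes g: "\<And>i. i < L \<Longrightarrow> g i \<in> borel_measurable M" and k: "k < L"
  shows "(\<lambda>x. sort (map (\<lambda>i. g i x) [0..<L]) ! k) \<in> borel_measurable M"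
proof (subst borel_measurable_iff_le, intro allI)
  fix c
  have eq: "{w \<in> space M. sort (map (\<lambda>i. g i w) [0..<L]) ! k \<le> c} =
        {w \<in> space M. Suc k \<le> card {i. i < L \<and> g i w \<le> c}}"
  proof -
    have "\<And>x. {i. i < length (map (\<lambda>i. g i x) [0..<L]) \<and> map (\<lambda>i. g i x) [0..<L] ! i \<le> c} = {i. i<L \<and> g i x \<le> c}" by auto
    moreover have "\<And>x. (sort (map (\<lambda>i. g i x) [0..<L]) ! k \<le> c) \<longleftrightarrow> Suc k \<le> length (filter (\<lambda>v. v \<le> c) (map (\<lambda>i. g i x) [0..<L]))"
      using k by (intro sort_nth_le_iff) simp
    ultimately show ?thesis by (simp only: length_filter_conv_card)
  qed
  have sets: "\<And>i. {x \<in> space M. i \<in> {i. i < L \<and> g i x \<le> c}} \<in> sets M"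
  proof -
    fix i show "{x \<in> space M. i \<in> {i. i < L \<and> g i x \<le> c}} \<in> sets M"
    proof (cases "i < L")
      case True
      have "\<forall>a. {x \<in> space M. g i x \<le> a} \<in> sets M" by (rule iffD1[OF borel_measurable_iff_le g[OF True]])
      then have "{x \<in> space M. g i x \<le> c} \<in> sets M" by (rule spec)
      then show ?thesis using True by simp
    qed simp
  qed
  have cm: "(\<lambda>x. card {i. i < L \<and> g i x \<le> c}) \<in> measurable M (count_space UNIV)"
    by (rule measurable_card) (rule sets)
  have "(\<lambda>x. card {i. i < L \<and> g i x \<le> c}) -` {Suc k..} \<inter> space M \<in> sets M"
    by (rule measurable_sets[OF cm]) simp
  moreover have "(\<lambda>x. card {i. i < L \<and> g i x \<le> c}) -` {Suc k..} \<inter> space M = {w \<in> space M. Suc k \<le> card {i. i < L \<and> g i w \<le> c}}"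
    by auto
  ultimately have "{w \<in> space M. Suc k \<le> card {i. i < L \<and> g i w \<le> c}} \<in> sets M"
    by (simp only:)
  then show "{w \<in> space M. sort (map (\<lambda>i. g i w) [0..<L]) ! k \<le> c} \<in> sets M"
    by (simp only: eq)
qed

lemma borel_measurable_departure:
  assumes m: "m \<ge> 1" and f: "\<And>i'. i' \<le> i \<Longrightarrow> (\<lambda>x. f x i') \<in> borel_measurable M"
  shows "(\<lambda>x. departure m (f x) i) \<in> borel_measurable M"
  using f
proof (induction i rule: less_induct)
  case (less i)
  show ?case
  proof (cases "i < m")
    case True
    then show ?thesis using less.prems by (simp add: departure_initial)
  next
    case False
    have "(\<lambda>x. sort (map (\<lambda>i'. departure m (f x) i') [0..<i]) ! (i - m)) \<in> borel_measurable M"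
      using less False m by (intro borel_measurable_sort_nth) auto
    moreover have "(\<lambda>x. f x i) \<in> borel_measurable M" using less.prems by simp
    ultimately show ?thesis using False
      by (subst departure.simps) (simp del: departure.simps)
  qed
qed

lemma measurable_num_departures[measurable]:
  fixes f :: "'a \<Rightarrow> nat \<Rightarrow> real"
  assumes "m \<ge> 1" and "\<And>i. i \<in> {..<n} \<Longrightarrow> (\<lambda>x. f x i) \<in> borel_measurable M"
    and "g \<in> borel_measurable M"
  shows "(\<lambda>x. num_departures m n (g x) (f x)) \<in> measurable M (count_space UNIV)"
  unfolding num_departures_def
proof (rule measurable_card)
  fix i
  show "{x \<in> space M. i \<in> {i. i < n \<and> departure m (f x) i \<le> g x}} \<in> sets M"
  proof (cases "i < n")
    case True
    then have "(\<lambda>x. departure m (f x) i) \<in> borel_measurable M"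
      using assms by (intro borel_measurable_departure) auto
    from borel_measurable_le[OF this assms(3)] show ?thesis using True by simp
  qed simp
qed

section \<open>Exponential service requirements\<close>

definition Exp :: "real \<Rightarrow> real measure" where
  "Exp \<mu> = density lborel (\<lambda>x. ennreal (exponential_density \<mu> x))"

lemma sets_Exp[measurable_cong, simp]: "sets (Exp \<mu>) = sets borel"
  by (simp add: Exp_def)

lemma space_Exp[simp]: "space (Exp \<mu>) = UNIV"
  by (simp add: Exp_def)

lemma prob_space_Exp: "\<mu> > 0 \<Longrightarrow> prob_space (Exp \<mu>)"
  unfolding Exp_def by (rule prob_space_exponential_density)

lemma AE_Exp_nonneg: "AE y in Exp \<mu>. 0 \<le> y"
  unfolding Exp_def by (subst AE_density) (auto simp: exponential_density_def)

lemma AE_Exp_neq: "AE y in Exp \<mu>. y \<noteq> c"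
  unfolding Exp_def by (subst AE_density) (auto intro: AE_mp[OF AE_lborel_singleton[of c]])

lemma nn_integral_Exp_memoryless:
  assumes \<mu>: "\<mu> > 0" and t: "t \<ge> 0" and f[measurable]: "f \<in> borel_measurable borel"
  shows "(\<integral>\<^sup>+ y. indicator {t..} y * f (y - t) \<partial>Exp \<mu>) = ennreal (exp (- (\<mu> * t))) * (\<integral>\<^sup>+ y. f y \<partial>Exp \<mu>)"
proof -
  let ?e = "\<lambda>x. ennreal (exponential_density \<mu> x)"
  have density_shift: "?e y * indicator {t..} y = ennreal (exp (- (\<mu> * t))) * ?e (y - t)" for y
  proof (cases "t \<le> y")
    case True
    then have "exponential_density \<mu> y = exp (- (\<mu> * t)) * exponential_density \<mu> (y - t)"
      using t by (simp add: exponential_density_def algebra_simps flip: exp_add)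
    then show ?thesis using True exponential_density_nonneg[OF \<mu>] by (simp add: ennreal_mult)
  qed (simp add: exponential_density_def)
  have "(\<integral>\<^sup>+ y. indicator {t..} y * f (y - t) \<partial>Exp \<mu>) = (\<integral>\<^sup>+ y. ?e y * (indicator {t..} y * f (y - t)) \<partial>lborel)"
    unfolding Exp_def by (subst nn_integral_density) auto
  also have "\<dots> = (\<integral>\<^sup>+ y. ennreal (exp (- (\<mu> * t))) * (?e (y - t) * f (y - t)) \<partial>lborel)"
    by (intro nn_integral_cong) (metis density_shift mult.assoc)
  also have "\<dots> = ennreal (exp (- (\<mu> * t))) * (\<integral>\<^sup>+ y. ?e (y - t) * f (y - t) \<partial>lborel)"
    by (rule nn_integral_cmult) measurable
  also have "(\<integral>\<^sup>+ y. ?e (y - t) * f (y - t) \<partial>lborel) = (\<integral>\<^sup>+ y. ?e y * f y \<partial>lborel)"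
    using lborel_integral_real_affine[where c=1 and t="- t"]
      nn_integral_distr[of "(+) (- t)" lborel borel "\<lambda>y. ?e y * f y"] lborel_distr_plus[of "- t"]
    by simp
  also have "(\<integral>\<^sup>+ y. ?e y * f y \<partial>lborel) = (\<integral>\<^sup>+ y. f y \<partial>Exp \<mu>)"
    unfolding Exp_def by (subst nn_integral_density) auto
  finally show ?thesis .
qed

lemma nn_integral_Exp_pos:
  assumes \<mu>: "\<mu> > 0" and ab: "0 \<le> a" "a < b" and f: "f \<in> borel_measurable borel"
    and pos: "\<And>y. a < y \<Longrightarrow> y < b \<Longrightarrow> 0 < f y"
  shows "0 < (\<integral>\<^sup>+y. f y \<partial>Exp \<mu>)"
proof (rule ccontr)
  assume "\<not> 0 < (\<integral>\<^sup>+y. f y \<partial>Exp \<mu>)"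
  moreover have "f \<in> borel_measurable (Exp \<mu>)"
    using f by (simp only: measurable_cong_sets[OF sets_Exp refl])
  ultimately have "AE y in Exp \<mu>. f y = 0" by (simp add: nn_integral_0_iff_AE)
  then have "AE y in lborel. 0 < ennreal (exponential_density \<mu> y) \<longrightarrow> f y = 0"
    unfolding Exp_def by (subst (asm) AE_density) auto
  then have "AE y in lborel. y \<notin> {a<..<b}"
  proof (rule AE_mp, intro AE_I2 impI notI)
    fix y assume "0 < ennreal (exponential_density \<mu> y) \<longrightarrow> f y = 0" and y: "y \<in> {a<..<b}"
    moreover have "0 < exponential_density \<mu> y" using y ab \<mu> by (auto simp: exponential_density_def)
    ultimately show False using pos[of y] by simp
  qed
  then have "emeasure lborel {a<..<b} = 0"
    by (subst (asm) AE_iff_measurable[of "{a<..<b}"]) auto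
  then show False using ab by simp
qed

lemma product_sigma_finite_Exp: "\<mu> > 0 \<Longrightarrow> product_sigma_finite (\<lambda>_. Exp \<mu>)"
  unfolding product_sigma_finite_def by (simp add: prob_space_Exp prob_space_imp_sigma_finite)

lemma prob_space_PiM_Exp: "\<mu> > 0 \<Longrightarrow> prob_space (PiM N (\<lambda>_. Exp \<mu>))"
  by (simp add: prob_space_PiM prob_space_Exp)

lemma measurable_PiM_Exp_shift[measurable]:
  "(\<lambda>z. \<lambda>i\<in>N. z i - d i) \<in> measurable (PiM N (\<lambda>_. Exp \<mu>)) (PiM N (\<lambda>_. Exp \<mu>))"
  by (rule measurable_restrict) measurable

lemma nn_integral_PiM_Exp_shift_coord:
  assumes \<mu>: "\<mu> > 0" and t: "t \<ge> 0" and N: "finite N" "c \<in> N"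
    and K[measurable]: "K \<in> borel_measurable (PiM N (\<lambda>_. Exp \<mu>))"
  shows "(\<integral>\<^sup>+z. indicator {t..} (z c) * K (\<lambda>i\<in>N. z i - (if i = c then t else 0)) \<partial>PiM N (\<lambda>_. Exp \<mu>))
       = ennreal (exp (- (\<mu> * t))) * (\<integral>\<^sup>+z. K z \<partial>PiM N (\<lambda>_. Exp \<mu>))"
proof -
  interpret product_sigma_finite "\<lambda>_. Exp \<mu>" using product_sigma_finite_Exp[OF \<mu>] .
  define N' where "N' = N - {c}"
  have N': "N = insert c N'" "c \<notin> N'" "finite N'" using N by (auto simp: N'_def)
  have K': "K \<in> borel_measurable (PiM (insert c N') (\<lambda>_. Exp \<mu>))"
    using K N'(1) by simp
  let ?F = "\<lambda>z. indicator {t..} (z c) * K (\<lambda>i\<in>N. z i - (if i = c then t else 0))"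
  have "?F \<in> borel_measurable (PiM N (\<lambda>_. Exp \<mu>))"
    using N by measurable
  then have "(\<integral>\<^sup>+z. ?F z \<partial>PiM N (\<lambda>_. Exp \<mu>)) = (\<integral>\<^sup>+x. (\<integral>\<^sup>+y. ?F (x(c := y)) \<partial>Exp \<mu>) \<partial>PiM N' (\<lambda>_. Exp \<mu>))"
    using product_nn_integral_insert[of N' c ?F] N' by simp
  also have "\<dots> = (\<integral>\<^sup>+x. ennreal (exp (- (\<mu> * t))) * (\<integral>\<^sup>+y. K (x(c := y)) \<partial>Exp \<mu>) \<partial>PiM N' (\<lambda>_. Exp \<mu>))"
  proof (intro nn_integral_cong)
    fix x assume x: "x \<in> space (PiM N' (\<lambda>_. Exp \<mu>))"
    then have "(\<lambda>i\<in>N. (x(c := y)) i - (if i = c then t else 0)) = x(c := y - t)" for y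
      using N' by (auto simp: fun_eq_iff space_PiM PiE_def extensional_def)
    moreover have "(\<lambda>y. K (x(c := y))) \<in> borel_measurable (Exp \<mu>)"
      using measurable_component_update[OF x N'(2)] K N'(1)
      by (intro measurable_compose[where f="\<lambda>y. x(c := y)" and g=K]) simp_all
    then have "(\<lambda>y. K (x(c := y))) \<in> borel_measurable borel"
      by (simp only: measurable_cong_sets[OF sets_Exp refl])
    ultimately show "(\<integral>\<^sup>+y. ?F (x(c := y)) \<partial>Exp \<mu>) = ennreal (exp (- (\<mu> * t))) * (\<integral>\<^sup>+y. K (x(c := y)) \<partial>Exp \<mu>)"
      using nn_integral_Exp_memoryless[OF \<mu> t] by simp
  qed
  also have "\<dots> = ennreal (exp (- (\<mu> * t))) * (\<integral>\<^sup>+x. (\<integral>\<^sup>+y. K (x(c := y)) \<partial>Exp \<mu>) \<partial>PiM N' (\<lambda>_. Exp \<mu>))"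
  proof (rule nn_integral_cmult)
    have "(\<lambda>(x, y). K (x(c := y))) \<in> borel_measurable (PiM N' (\<lambda>_. Exp \<mu>) \<Otimes>\<^sub>M Exp \<mu>)"
      using measurable_compose[OF measurable_add_dim[of c N' "\<lambda>_. Exp \<mu>"] K'] by (simp add: split_beta')
    then show "(\<lambda>x. \<integral>\<^sup>+ y. K (x(c := y)) \<partial>Exp \<mu>) \<in> borel_measurable (PiM N' (\<lambda>_. Exp \<mu>))"
      by (rule sigma_finite_measure.borel_measurable_nn_integral[OF
          prob_space_imp_sigma_finite[OF prob_space_Exp[OF \<mu>]], of "\<lambda>x y. K (x(c := y))", simplified])
  qed
  also have "(\<integral>\<^sup>+x. (\<integral>\<^sup>+y. K (x(c := y)) \<partial>Exp \<mu>) \<partial>PiM N' (\<lambda>_. Exp \<mu>)) = (\<integral>\<^sup>+z. K z \<partial>PiM N (\<lambda>_. Exp \<mu>))"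
    using product_nn_integral_insert[of N' c K] N' K' by simp
  finally show ?thesis .
qed

lemma nn_integral_PiM_Exp_shift:
  assumes \<mu>: "\<mu> > 0" and t: "t \<ge> 0" and N: "finite N" and C: "C \<subseteq> N"
    and H: "H \<in> borel_measurable (PiM N (\<lambda>_. Exp \<mu>))"
  shows "(\<integral>\<^sup>+z. (if \<forall>i\<in>C. t \<le> z i then H (\<lambda>i\<in>N. z i - (if i \<in> C then t else 0)) else 0) \<partial>PiM N (\<lambda>_. Exp \<mu>))
       = ennreal (exp (- (\<mu> * t))) ^ card C * (\<integral>\<^sup>+z. H z \<partial>PiM N (\<lambda>_. Exp \<mu>))"
  using finite_subset[OF C N] C H
proof (induction C arbitrary: H rule: finite_induct)
  case empty
  have "(\<lambda>i\<in>N. z i) = z" if "z \<in> space (PiM N (\<lambda>_. Exp \<mu>))" for z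
    using that by (auto simp: space_PiM PiE_def extensional_def fun_eq_iff)
  then show ?case by (simp cong: nn_integral_cong)
next
  case (insert c C)
  define K where "K w = (if \<forall>i\<in>C. t \<le> w i then H (\<lambda>i\<in>N. w i - (if i \<in> C then t else 0)) else 0)" for w
  have cN: "c \<in> N" and CN: "C \<subseteq> N" using insert by auto
  note [measurable] = insert.prems(2)
  have "{w \<in> space (PiM N (\<lambda>_. Exp \<mu>)). \<forall>i\<in>C. t \<le> w i} \<in> sets (PiM N (\<lambda>_. Exp \<mu>))"
  proof (intro sets.sets_Collect_finite_All insert(1))
    fix i assume "i \<in> C"
    with CN have "i \<in> N" by auto
    then show "{w \<in> space (PiM N (\<lambda>_. Exp \<mu>)). t \<le> w i} \<in> sets (PiM N (\<lambda>_. Exp \<mu>))"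
      by measurable
  qed
  then have [measurable]: "K \<in> borel_measurable (PiM N (\<lambda>_. Exp \<mu>))"
    unfolding K_def by (rule measurable_If[rotated 2]) measurable
  have "(\<integral>\<^sup>+z. (if \<forall>i\<in>insert c C. t \<le> z i then H (\<lambda>i\<in>N. z i - (if i \<in> insert c C then t else 0)) else 0) \<partial>PiM N (\<lambda>_. Exp \<mu>))
      = (\<integral>\<^sup>+z. indicator {t..} (z c) * K (\<lambda>i\<in>N. z i - (if i = c then t else 0)) \<partial>PiM N (\<lambda>_. Exp \<mu>))"
  proof (intro nn_integral_cong)
    fix z assume "z \<in> space (PiM N (\<lambda>_. Exp \<mu>))"
    let ?z' = "\<lambda>i\<in>N. z i - (if i = c then t else 0)"
    have "(\<forall>i\<in>C. t \<le> ?z' i) = (\<forall>i\<in>C. t \<le> z i)" using insert(2) CN by auto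
    moreover have "(\<lambda>i\<in>N. ?z' i - (if i \<in> C then t else 0)) = (\<lambda>i\<in>N. z i - (if i \<in> insert c C then t else 0))"
      using insert(2) by (auto simp: fun_eq_iff)
    ultimately show "(if \<forall>i\<in>insert c C. t \<le> z i then H (\<lambda>i\<in>N. z i - (if i \<in> insert c C then t else 0)) else 0)
        = indicator {t..} (z c) * K ?z'"
      unfolding K_def by (auto simp: indicator_def)
  qed
  also have "\<dots> = ennreal (exp (- (\<mu> * t))) * (\<integral>\<^sup>+z. K z \<partial>PiM N (\<lambda>_. Exp \<mu>))"
    using cN by (intro nn_integral_PiM_Exp_shift_coord[OF \<mu> t N]) measurable
  also have "(\<integral>\<^sup>+z. K z \<partial>PiM N (\<lambda>_. Exp \<mu>)) = ennreal (exp (- (\<mu> * t))) ^ card C * (\<integral>\<^sup>+z. H z \<partial>PiM N (\<lambda>_. Exp \<mu>))"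
    unfolding K_def using insert.IH CN insert.prems(2) .
  finally show ?case using insert(1,2) by (simp add: mult.assoc)
qed

lemma AE_PiM_Exp_nonneg:
  assumes "\<mu> > 0" and "finite N"
  shows "AE s in PiM N (\<lambda>_. Exp \<mu>). \<forall>i\<in>N. 0 \<le> s i"
  using assms by (intro AE_finite_allI AE_PiM_component[where P="\<lambda>y. 0 \<le> y"])
    (simp_all add: prob_space_Exp AE_Exp_nonneg)

lemma AE_PiM_Exp_neq:
  assumes \<mu>: "\<mu> > 0" and N: "finite N" and i: "i \<in> N" and i': "i' \<in> N" and "i \<noteq> i'"
  shows "AE s in PiM N (\<lambda>_. Exp \<mu>). s i \<noteq> s i'"
proof -
  interpret product_sigma_finite "\<lambda>_. Exp \<mu>" using product_sigma_finite_Exp[OF \<mu>] .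
  define A where "A = {s \<in> space (PiM N (\<lambda>_. Exp \<mu>)). s i = s i'}"
  have A[measurable]: "A \<in> sets (PiM N (\<lambda>_. Exp \<mu>))"
    unfolding A_def using i i' by measurable
  define N' where "N' = N - {i}"
  have N': "N = insert i N'" "i \<notin> N'" "finite N'" using N i by (auto simp: N'_def)
  have "emeasure (PiM N (\<lambda>_. Exp \<mu>)) A = (\<integral>\<^sup>+s. indicator A s \<partial>PiM N (\<lambda>_. Exp \<mu>))"
    by simp
  also have "\<dots> = (\<integral>\<^sup>+x. (\<integral>\<^sup>+y. indicator A (x(i := y)) \<partial>Exp \<mu>) \<partial>PiM N' (\<lambda>_. Exp \<mu>))"
    unfolding N'(1) by (rule product_nn_integral_insert[OF N'(3,2)]) (use A N'(1) in simp)
  also have "\<dots> = (\<integral>\<^sup>+x. 0 \<partial>PiM N' (\<lambda>_. Exp \<mu>))"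
  proof (intro nn_integral_cong)
    fix x assume x: "x \<in> space (PiM N' (\<lambda>_. Exp \<mu>))"
    then have "indicator A (x(i := y)) = (indicator {x i'} y :: ennreal)" for y
      using N'(1) \<open>i \<noteq> i'\<close> by (auto simp: A_def indicator_def space_PiM PiE_def extensional_def)
    moreover have "(\<integral>\<^sup>+y. indicator {x i'} y \<partial>Exp \<mu>) = 0"
      using AE_Exp_neq[of "x i'" \<mu>] by (subst nn_integral_0_iff_AE) (auto simp: indicator_def)
    ultimately show "(\<integral>\<^sup>+y. indicator A (x(i := y)) \<partial>Exp \<mu>) = 0" by simp
  qed
  finally have "emeasure (PiM N (\<lambda>_. Exp \<mu>)) A = 0" by simp
  then show ?thesis using AE_iff_measurable[OF A, of "\<lambda>s. s i \<noteq> s i'"] by (simp add: A_def)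
qed

lemma AE_PiM_Exp_inj_on:
  assumes "\<mu> > 0" and "finite N"
  shows "AE s in PiM N (\<lambda>_. Exp \<mu>). inj_on s N"
  unfolding inj_on_def
proof (intro AE_finite_allI \<open>finite N\<close>)
  fix i i' assume "i \<in> N" "i' \<in> N"
  show "AE s in PiM N (\<lambda>_. Exp \<mu>). s i = s i' \<longrightarrow> i = i'"
  proof (cases "i = i'")
    case False
    with AE_PiM_Exp_neq[OF assms \<open>i \<in> N\<close> \<open>i' \<in> N\<close>] show ?thesis by simp
  qed simp
qed

section \<open>Conditioning on the first departure\<close>

lemma sets_PiM_Exp_ball_le:
  assumes "C \<subseteq> N" "finite C" and f[measurable]: "f \<in> borel_measurable (PiM N (\<lambda>_. Exp \<mu>))"
  shows "{z \<in> space (PiM N (\<lambda>_. Exp \<mu>)). \<forall>i\<in>C. f z \<le> z i} \<in> sets (PiM N (\<lambda>_. Exp \<mu>))"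
proof (intro sets.sets_Collect_finite_All \<open>finite C\<close>)
  fix i assume "i \<in> C"
  with assms(1) have "i \<in> N" by auto
  then show "{z \<in> space (PiM N (\<lambda>_. Exp \<mu>)). f z \<le> z i} \<in> sets (PiM N (\<lambda>_. Exp \<mu>))"
    by measurable
qed

lemma sets_PiM_Exp_argmin:
  fixes a k n :: nat
  assumes "a < k" "k \<le> n"
  shows "{s \<in> space (PiM {..<n} (\<lambda>_. Exp \<mu>)). \<forall>i<k. s a \<le> s i} \<in> sets (PiM {..<n} (\<lambda>_. Exp \<mu>))"
proof -
  have "a \<in> {..<n}" "{..<k} \<subseteq> {..<n}" using assms by auto
  then have "(\<lambda>s. s a) \<in> borel_measurable (PiM {..<n} (\<lambda>_. Exp \<mu>))" by measurable
  from sets_PiM_Exp_ball_le[OF \<open>{..<k} \<subseteq> {..<n}\<close> finite_lessThan this]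
  show ?thesis unfolding Ball_def lessThan_iff .
qed

lemma measurable_residual:
  assumes "a < n"
  shows "residual n k a \<in> measurable (PiM {..<n} (\<lambda>_. Exp \<mu>)) (PiM {..<n - 1} (\<lambda>_. Exp \<mu>))"
  unfolding residual_def
proof (rule measurable_restrict)
  fix i assume "i \<in> {..<n - 1}"
  then have "skip a i \<in> {..<n}" "a \<in> {..<n}" using skip_less assms by auto
  then show "(\<lambda>s. s (skip a i) - (if i < k - 1 then s a else 0))
      \<in> measurable (PiM {..<n} (\<lambda>_. Exp \<mu>)) (Exp \<mu>)"
    by measurable
qed

lemma distr_PiM_skip:
  assumes "prob_space M" and "a < n"
  shows "distr (PiM ({..<n} - {a}) (\<lambda>_. M)) (PiM {..<n - 1} (\<lambda>_. M)) (\<lambda>x. \<lambda>i\<in>{..<n - 1}. x (skip a i))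
    = PiM {..<n - 1} (\<lambda>_. M)"
proof -
  have "inj_on (skip a) {..<n - 1}" using inj_skip by (rule inj_on_subset) simp
  moreover have "skip a \<in> {..<n - 1} \<rightarrow> {..<n} - {a}"
    using skip_image_lessThan[OF assms(2)] by blast
  ultimately show ?thesis
    using distr_PiM_reindex[of "{..<n} - {a}" "\<lambda>_. M" "skip a" "{..<n - 1}"] assms(1) by simp
qed

lemma argmin_unique:
  fixes s :: "nat \<Rightarrow> 'a::linorder"
  assumes "inj_on s {..<n}" "k \<le> n" "a0 < k" "\<forall>i<k. s a0 \<le> s i" "a < k"
  shows "(\<forall>i<k. s a \<le> s i) \<longleftrightarrow> a = a0"
proof
  assume "\<forall>i<k. s a \<le> s i"
  then have "s a = s a0" using assms(3-5) by (simp add: order.antisym)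
  then show "a = a0" using assms(1,2,3,5) by (auto dest: inj_onD)
qed (use assms(4) in simp)

lemma nn_integral_PiM_Exp_split_argmin:
  fixes n k :: nat
  assumes \<mu>: "\<mu> > 0" and k: "1 \<le> k" "k \<le> n" and f: "f \<in> borel_measurable (PiM {..<n} (\<lambda>_. Exp \<mu>))"
  shows "(\<integral>\<^sup>+s. f s \<partial>PiM {..<n} (\<lambda>_. Exp \<mu>))
    = (\<Sum>a<k. \<integral>\<^sup>+s. (if \<forall>i<k. s a \<le> s i then f s else 0) \<partial>PiM {..<n} (\<lambda>_. Exp \<mu>))"
proof -
  have "(\<lambda>s. if \<forall>i<k. s a \<le> s i then f s else 0) \<in> borel_measurable (PiM {..<n} (\<lambda>_. Exp \<mu>))"
    if "a < k" for a
    using f measurable_const sets_PiM_Exp_argmin[OF that k(2)] by (rule measurable_If) simp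
  then have "(\<Sum>a<k. \<integral>\<^sup>+s. (if \<forall>i<k. s a \<le> s i then f s else 0) \<partial>PiM {..<n} (\<lambda>_. Exp \<mu>))
      = (\<integral>\<^sup>+s. (\<Sum>a<k. if \<forall>i<k. s a \<le> s i then f s else 0) \<partial>PiM {..<n} (\<lambda>_. Exp \<mu>))"
    by (intro nn_integral_sum[symmetric]) simp
  also have "\<dots> = (\<integral>\<^sup>+s. f s \<partial>PiM {..<n} (\<lambda>_. Exp \<mu>))"
  proof (rule nn_integral_cong_AE)
    show "AE s in PiM {..<n} (\<lambda>_. Exp \<mu>). (\<Sum>a<k. if \<forall>i<k. s a \<le> s i then f s else 0) = f s"
      using AE_PiM_Exp_inj_on[OF \<mu> finite_lessThan[of n]]
    proof eventually_elim
      fix s :: "nat \<Rightarrow> real"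
      assume inj: "inj_on s {..<n}"
      have "{..<k} \<noteq> {}" using k(1) by (simp add: lessThan_empty_iff)
      then obtain a0 where "is_arg_min s (\<lambda>i. i \<in> {..<k}) a0"
        using ex_is_arg_min_if_finite[of "{..<k}" s] by blast
      then have a0: "a0 < k" "\<forall>i<k. s a0 \<le> s i" by (auto simp: is_arg_min_linorder)
      have "(\<Sum>a<k. if \<forall>i<k. s a \<le> s i then f s else 0) = (\<Sum>a<k. if a = a0 then f s else 0)"
        using argmin_unique[OF inj k(2) a0] by (intro sum.cong refl) simp
      then show "(\<Sum>a<k. if \<forall>i<k. s a \<le> s i then f s else 0) = f s"
        using a0(1) by simp
    qed
  qed
  finally show ?thesis by simp
qed

lemma nn_integral_residual_fixed_first:
  fixes n k a :: nat
  assumes \<mu>: "\<mu> > 0" and y: "0 \<le> y" and a: "a < k" and kn: "k \<le> n"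
    and g: "g \<in> borel_measurable (PiM {..<n - 1} (\<lambda>_. Exp \<mu>))"
  shows "(\<integral>\<^sup>+x. (if \<forall>i<k. y \<le> (x(a := y)) i then g (residual n k a (x(a := y))) else 0)
            \<partial>PiM ({..<n} - {a}) (\<lambda>_. Exp \<mu>))
       = ennreal (exp (- (\<mu> * y))) ^ (k - 1) * (\<integral>\<^sup>+z. g z \<partial>PiM {..<n - 1} (\<lambda>_. Exp \<mu>))"
proof -
  let ?I = "{..<n} - {a}" and ?J = "{..<n - 1}" and ?C = "{..<k - 1}"
  let ?reindex = "\<lambda>x. \<lambda>i\<in>?J. x (skip a i)"
  define H where "H z = (if \<forall>i\<in>?C. y \<le> z i then g (\<lambda>i\<in>?J. z i - (if i \<in> ?C then y else 0)) else 0)" for z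
  have an: "a < n" using a kn by simp
  have reindex: "?reindex \<in> measurable (PiM ?I (\<lambda>_. Exp \<mu>)) (PiM ?J (\<lambda>_. Exp \<mu>))"
  proof (rule measurable_restrict)
    fix i assume "i \<in> ?J"
    then have "skip a i \<in> ?I" using skip_image_lessThan[OF an] by blast
    then show "(\<lambda>x. x (skip a i)) \<in> measurable (PiM ?I (\<lambda>_. Exp \<mu>)) (Exp \<mu>)"
      by (rule measurable_component_singleton)
  qed
  have C: "{z \<in> space (PiM ?J (\<lambda>_. Exp \<mu>)). \<forall>i\<in>?C. y \<le> z i} \<in> sets (PiM ?J (\<lambda>_. Exp \<mu>))"
    using kn by (intro sets_PiM_Exp_ball_le) auto
  have H: "H \<in> borel_measurable (PiM ?J (\<lambda>_. Exp \<mu>))"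
    unfolding H_def
    by (rule measurable_If[OF measurable_compose[OF measurable_PiM_Exp_shift g] measurable_const C]) simp
  have "(\<integral>\<^sup>+x. (if \<forall>i<k. y \<le> (x(a := y)) i then g (residual n k a (x(a := y))) else 0) \<partial>PiM ?I (\<lambda>_. Exp \<mu>))
      = (\<integral>\<^sup>+x. H (?reindex x) \<partial>PiM ?I (\<lambda>_. Exp \<mu>))"
  proof (intro nn_integral_cong)
    fix x
    have "(\<forall>i<k. y \<le> (x(a := y)) i) \<longleftrightarrow> (\<forall>i\<in>{..<k} - {a}. y \<le> x i)" by auto
    also have "\<dots> \<longleftrightarrow> (\<forall>i\<in>skip a ` ?C. y \<le> x i)"
      by (simp only: skip_image_lessThan[OF a])
    also have "\<dots> \<longleftrightarrow> (\<forall>i\<in>?C. y \<le> ?reindex x i)"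
      using kn by auto
    finally have "(\<forall>i<k. y \<le> (x(a := y)) i) \<longleftrightarrow> (\<forall>i\<in>?C. y \<le> ?reindex x i)" .
    moreover have "residual n k a (x(a := y)) = (\<lambda>i\<in>?J. ?reindex x i - (if i \<in> ?C then y else 0))"
      by (auto simp: residual_def fun_eq_iff skip_neq)
    ultimately show "(if \<forall>i<k. y \<le> (x(a := y)) i then g (residual n k a (x(a := y))) else 0) = H (?reindex x)"
      unfolding H_def by simp
  qed
  also have "\<dots> = (\<integral>\<^sup>+z. H z \<partial>distr (PiM ?I (\<lambda>_. Exp \<mu>)) (PiM ?J (\<lambda>_. Exp \<mu>)) ?reindex)"
    using H by (intro nn_integral_distr[symmetric, OF reindex]) simp
  also have "\<dots> = (\<integral>\<^sup>+z. H z \<partial>PiM ?J (\<lambda>_. Exp \<mu>))"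
    by (simp only: distr_PiM_skip[OF prob_space_Exp[OF \<mu>] an])
  also have "\<dots> = ennreal (exp (- (\<mu> * y))) ^ (k - 1) * (\<integral>\<^sup>+z. g z \<partial>PiM ?J (\<lambda>_. Exp \<mu>))"
    unfolding H_def using kn g by (subst nn_integral_PiM_Exp_shift[OF \<mu> y]) auto
  finally show ?thesis .
qed

lemma nn_integral_first_departure:
  fixes n k a :: nat and G :: "real \<Rightarrow> (nat \<Rightarrow> real) \<Rightarrow> ennreal"
  assumes \<mu>: "\<mu> > 0" and a: "a < k" and kn: "k \<le> n"
    and G: "(\<lambda>(t, z). G t z) \<in> borel_measurable (borel \<Otimes>\<^sub>M PiM {..<n - 1} (\<lambda>_. Exp \<mu>))"
  shows "(\<integral>\<^sup>+s. (if \<forall>i<k. s a \<le> s i then G (s a) (residual n k a s) else 0) \<partial>PiM {..<n} (\<lambda>_. Exp \<mu>))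
       = (\<integral>\<^sup>+y. ennreal (exp (- (\<mu> * y))) ^ (k - 1) * (\<integral>\<^sup>+z. G y z \<partial>PiM {..<n - 1} (\<lambda>_. Exp \<mu>)) \<partial>Exp \<mu>)"
proof -
  interpret product_sigma_finite "\<lambda>_. Exp \<mu>" using product_sigma_finite_Exp[OF \<mu>] .
  let ?I = "{..<n} - {a}"
  let ?f = "\<lambda>s. if \<forall>i<k. s a \<le> s i then G (s a) (residual n k a s) else 0"
  have an: "a < n" and I: "a \<notin> ?I" "finite ?I" "{..<n} = insert a ?I" using a kn by auto
  have "(\<lambda>s. (s a, residual n k a s)) \<in> measurable (PiM {..<n} (\<lambda>_. Exp \<mu>)) (borel \<Otimes>\<^sub>M PiM {..<n - 1} (\<lambda>_. Exp \<mu>))"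
  proof (rule measurable_Pair[OF _ measurable_residual[OF an]])
    have "a \<in> {..<n}" using an by simp
    then show "(\<lambda>s. s a) \<in> borel_measurable (PiM {..<n} (\<lambda>_. Exp \<mu>))" by measurable
  qed
  from measurable_compose[OF this G]
  have "(\<lambda>s. G (s a) (residual n k a s)) \<in> borel_measurable (PiM {..<n} (\<lambda>_. Exp \<mu>))" by simp
  then have f: "?f \<in> borel_measurable (PiM (insert a ?I) (\<lambda>_. Exp \<mu>))"
    using measurable_const sets_PiM_Exp_argmin[OF a kn] unfolding I(3)[symmetric] by (rule measurable_If) simp
  have "(\<integral>\<^sup>+s. ?f s \<partial>PiM {..<n} (\<lambda>_. Exp \<mu>)) = (\<integral>\<^sup>+y. (\<integral>\<^sup>+x. ?f (x(a := y)) \<partial>PiM ?I (\<lambda>_. Exp \<mu>)) \<partial>Exp \<mu>)"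
    using product_nn_integral_insert_rev[OF I(2,1) f] by (simp only: I(3)[symmetric])
  also have "\<dots> = (\<integral>\<^sup>+y. ennreal (exp (- (\<mu> * y))) ^ (k - 1) * (\<integral>\<^sup>+z. G y z \<partial>PiM {..<n - 1} (\<lambda>_. Exp \<mu>)) \<partial>Exp \<mu>)"
  proof (rule nn_integral_cong_AE)
    show "AE y in Exp \<mu>. (\<integral>\<^sup>+x. ?f (x(a := y)) \<partial>PiM ?I (\<lambda>_. Exp \<mu>)) =
        ennreal (exp (- (\<mu> * y))) ^ (k - 1) * (\<integral>\<^sup>+z. G y z \<partial>PiM {..<n - 1} (\<lambda>_. Exp \<mu>))"
      using AE_Exp_nonneg
    proof eventually_elim
      case (elim y)
      have "G y \<in> borel_measurable (PiM {..<n - 1} (\<lambda>_. Exp \<mu>))"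
        using measurable_Pair2[OF G, of y] by simp
      from nn_integral_residual_fixed_first[OF \<mu> elim a kn this] show ?case
        by (simp only: fun_upd_same)
    qed
  qed
  finally show ?thesis .
qed

lemma nn_integral_first_departure_recursion:
  fixes n k :: nat and Psi :: "(nat \<Rightarrow> real) \<Rightarrow> ennreal" and G :: "nat \<Rightarrow> real \<Rightarrow> (nat \<Rightarrow> real) \<Rightarrow> ennreal"
  assumes \<mu>: "\<mu> > 0" and m: "m \<ge> 1" and n: "n \<ge> 1" and k: "k = min n m"
    and Psi: "Psi \<in> borel_measurable (PiM {..<n} (\<lambda>_. Exp \<mu>))"
    and G: "\<And>a. a < k \<Longrightarrow> (\<lambda>(t, z). G a t z) \<in> borel_measurable (borel \<Otimes>\<^sub>M PiM {..<n - 1} (\<lambda>_. Exp \<mu>))"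
    and Psi_eq: "\<And>a s. first_departure m n k a s \<Longrightarrow> Psi s = G a (s a) (residual n k a s)"
  shows "(\<integral>\<^sup>+s. Psi s \<partial>PiM {..<n} (\<lambda>_. Exp \<mu>)) =
    (\<Sum>a<k. \<integral>\<^sup>+y. ennreal (exp (- (\<mu> * y))) ^ (k - 1) * (\<integral>\<^sup>+z. G a y z \<partial>PiM {..<n - 1} (\<lambda>_. Exp \<mu>)) \<partial>Exp \<mu>)"
proof -
  have k1: "1 \<le> k" "k \<le> n" using m n k by auto
  have "(\<integral>\<^sup>+s. Psi s \<partial>PiM {..<n} (\<lambda>_. Exp \<mu>))
      = (\<Sum>a<k. \<integral>\<^sup>+s. (if \<forall>i<k. s a \<le> s i then Psi s else 0) \<partial>PiM {..<n} (\<lambda>_. Exp \<mu>))"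
    by (rule nn_integral_PiM_Exp_split_argmin[OF \<mu> k1 Psi])
  also have "\<dots> = (\<Sum>a<k. \<integral>\<^sup>+s. (if \<forall>i<k. s a \<le> s i then G a (s a) (residual n k a s) else 0) \<partial>PiM {..<n} (\<lambda>_. Exp \<mu>))"
  proof (intro sum.cong refl nn_integral_cong_AE)
    fix a assume "a \<in> {..<k}"
    show "AE s in PiM {..<n} (\<lambda>_. Exp \<mu>). (if \<forall>i<k. s a \<le> s i then Psi s else 0) =
        (if \<forall>i<k. s a \<le> s i then G a (s a) (residual n k a s) else 0)"
      using AE_PiM_Exp_nonneg[OF \<mu> finite_lessThan[of n]]
    proof eventually_elim
      case (elim s)
      then have "(\<forall>i<k. s a \<le> s i) \<Longrightarrow> first_departure m n k a s"
        using m k \<open>a \<in> {..<k}\<close> by unfold_locales auto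
      then show ?case using Psi_eq by auto
    qed
  qed
  also have "\<dots> = (\<Sum>a<k. \<integral>\<^sup>+y. ennreal (exp (- (\<mu> * y))) ^ (k - 1) * (\<integral>\<^sup>+z. G a y z \<partial>PiM {..<n - 1} (\<lambda>_. Exp \<mu>)) \<partial>Exp \<mu>)"
    using k1 G by (intro sum.cong refl nn_integral_first_departure[OF \<mu>]) auto
  finally show ?thesis .
qed

section \<open>Probabilities of the departure counts\<close>

definition departures_prob :: "real \<Rightarrow> nat \<Rightarrow> nat \<Rightarrow> real \<Rightarrow> nat \<Rightarrow> ennreal" where
  "departures_prob \<mu> m n h d = emeasure (PiM {..<n} (\<lambda>_. Exp \<mu>))
     {s \<in> space (PiM {..<n} (\<lambda>_. Exp \<mu>)). num_departures m n h s = d}"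

definition survival_prob :: "real \<Rightarrow> nat \<Rightarrow> nat \<Rightarrow> nat \<Rightarrow> real \<Rightarrow> nat \<Rightarrow> ennreal" where
  "survival_prob \<mu> m n j h d = emeasure (PiM {..<n} (\<lambda>_. Exp \<mu>))
     {s \<in> space (PiM {..<n} (\<lambda>_. Exp \<mu>)). h < s j \<and> num_departures m n h s = d}"

lemma departures_prob_nn_integral:
  assumes "m \<ge> 1"
  shows "departures_prob \<mu> m n h d
    = (\<integral>\<^sup>+s. (if num_departures m n h s = d then 1 else 0) \<partial>PiM {..<n} (\<lambda>_. Exp \<mu>))"
proof -
  have "{s \<in> space (PiM {..<n} (\<lambda>_. Exp \<mu>)). num_departures m n h s = d} \<in> sets (PiM {..<n} (\<lambda>_. Exp \<mu>))"
    using assms by measurable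
  then show ?thesis
    unfolding departures_prob_def by (simp flip: nn_integral_indicator cong: nn_integral_cong add: indicator_def of_bool_def)
qed

lemma survival_prob_nn_integral:
  assumes "m \<ge> 1" and "j < n"
  shows "survival_prob \<mu> m n j h d
    = (\<integral>\<^sup>+s. (if h < s j \<and> num_departures m n h s = d then 1 else 0) \<partial>PiM {..<n} (\<lambda>_. Exp \<mu>))"
proof -
  have "j \<in> {..<n}" using assms(2) by simp
  then have "{s \<in> space (PiM {..<n} (\<lambda>_. Exp \<mu>)). h < s j \<and> num_departures m n h s = d} \<in> sets (PiM {..<n} (\<lambda>_. Exp \<mu>))"
    using assms(1) by measurable
  then show ?thesis
    unfolding survival_prob_def by (simp flip: nn_integral_indicator cong: nn_integral_cong add: indicator_def of_bool_def)
qed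

lemma nn_integral_departures_after:
  assumes "m \<ge> 1"
  shows "(\<integral>\<^sup>+z. (if y \<le> h \<and> num_departures m n (h - y) z = d then 1 else 0) \<partial>PiM {..<n} (\<lambda>_. Exp \<mu>))
       = (if y \<le> h then departures_prob \<mu> m n (h - y) d else 0)"
  using departures_prob_nn_integral[OF assms] by simp

lemma borel_measurable_departures_after:
  assumes \<mu>: "\<mu> > 0" and "m \<ge> 1"
  shows "(\<lambda>y. if y \<le> h then departures_prob \<mu> m n (h - y) d else 0) \<in> borel_measurable borel"
proof -
  have "(\<lambda>(y, z). if y \<le> h \<and> num_departures m n (h - y) z = d then 1 else 0 :: ennreal)
      \<in> borel_measurable (borel \<Otimes>\<^sub>M PiM {..<n} (\<lambda>_. Exp \<mu>))"
    using assms(2) by measurable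
  from sigma_finite_measure.borel_measurable_nn_integral[OF
      prob_space_imp_sigma_finite[OF prob_space_PiM_Exp[OF \<mu>]] this]
  show ?thesis by (simp add: nn_integral_departures_after[OF assms(2)])
qed

lemma departures_prob_Suc:
  assumes \<mu>: "\<mu> > 0" and m: "m \<ge> 1" and n: "n \<ge> 1" and k: "k = min n m"
  shows "departures_prob \<mu> m n h (Suc d) = of_nat k *
    (\<integral>\<^sup>+y. ennreal (exp (- (\<mu> * y))) ^ (k - 1) * (if y \<le> h then departures_prob \<mu> m (n - 1) (h - y) d else 0) \<partial>Exp \<mu>)"
proof -
  have "departures_prob \<mu> m n h (Suc d) = (\<Sum>a<k. \<integral>\<^sup>+y. ennreal (exp (- (\<mu> * y))) ^ (k - 1) *
      (\<integral>\<^sup>+z. (if y \<le> h \<and> num_departures m (n - 1) (h - y) z = d then 1 else 0) \<partial>PiM {..<n - 1} (\<lambda>_. Exp \<mu>)) \<partial>Exp \<mu>)"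
    unfolding departures_prob_nn_integral[OF m]
  proof (rule nn_integral_first_departure_recursion[OF \<mu> m n k])
    show "(\<lambda>s. if num_departures m n h s = Suc d then 1 else 0 :: ennreal) \<in> borel_measurable (PiM {..<n} (\<lambda>_. Exp \<mu>))"
      using m by measurable
    show "(\<lambda>(t, z). if t \<le> h \<and> num_departures m (n - 1) (h - t) z = d then 1 else 0 :: ennreal)
        \<in> borel_measurable (borel \<Otimes>\<^sub>M PiM {..<n - 1} (\<lambda>_. Exp \<mu>))" for a
      using m by measurable
  next
    fix a s assume "first_departure m n k a s"
    from first_departure.num_departures_residual[OF this, of h]
    show "(if num_departures m n h s = Suc d then 1 else 0) =
        (if s a \<le> h \<and> num_departures m (n - 1) (h - s a) (residual n k a s) = d then 1 else 0 :: ennreal)"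
      by simp
  qed
  then show ?thesis by (simp only: nn_integral_departures_after[OF m] sum_constant card_lessThan)
qed

lemma departures_prob_0:
  assumes \<mu>: "\<mu> > 0" and m: "m \<ge> 1" and n: "n \<ge> 1" and k: "k = min n m"
  shows "departures_prob \<mu> m n h 0 = of_nat k *
    (\<integral>\<^sup>+y. ennreal (exp (- (\<mu> * y))) ^ (k - 1) * (if h < y then 1 else 0) \<partial>Exp \<mu>)"
proof -
  interpret prob_space "PiM {..<n - 1} (\<lambda>_. Exp \<mu>)" by (rule prob_space_PiM_Exp[OF \<mu>])
  have "departures_prob \<mu> m n h 0 = (\<Sum>a<k. \<integral>\<^sup>+y. ennreal (exp (- (\<mu> * y))) ^ (k - 1) *
      (\<integral>\<^sup>+z. (if h < y then 1 else 0) \<partial>PiM {..<n - 1} (\<lambda>_. Exp \<mu>)) \<partial>Exp \<mu>)"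
    unfolding departures_prob_nn_integral[OF m]
  proof (rule nn_integral_first_departure_recursion[OF \<mu> m n k])
    show "(\<lambda>s. if num_departures m n h s = 0 then 1 else 0 :: ennreal) \<in> borel_measurable (PiM {..<n} (\<lambda>_. Exp \<mu>))"
      using m by measurable
    show "(\<lambda>(t, z). if h < t then 1 else 0 :: ennreal) \<in> borel_measurable (borel \<Otimes>\<^sub>M PiM {..<n - 1} (\<lambda>_. Exp \<mu>))"
      for a by measurable
  next
    fix a s assume "first_departure m n k a s"
    from first_departure.num_departures_residual[OF this, of h]
    show "(if num_departures m n h s = 0 then 1 else 0) = (if h < s a then 1 else 0 :: ennreal)"
      by (simp add: not_le)
  qed
  then show ?thesis by (simp only: nn_integral_const emeasure_space_1 mult_1_right sum_constant card_lessThan)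
qed

lemma nn_integral_survival_after:
  assumes "m \<ge> 1" and "j < n"
  shows "(\<integral>\<^sup>+z. (if y \<le> h \<and> h - y < z j \<and> num_departures m n (h - y) z = d then 1 else 0) \<partial>PiM {..<n} (\<lambda>_. Exp \<mu>))
       = (if y \<le> h then survival_prob \<mu> m n j (h - y) d else 0)"
  using survival_prob_nn_integral[OF assms] by (cases "y \<le> h") simp_all

lemma survival_prob_Suc:
  assumes \<mu>: "\<mu> > 0" and m: "m \<ge> 1" and n: "n \<ge> 1" and k: "k = min n m" and j: "j < k"
  shows "survival_prob \<mu> m n j h (Suc d) = (\<Sum>a<k. if a = j then 0 else
    \<integral>\<^sup>+y. ennreal (exp (- (\<mu> * y))) ^ (k - 1) *
      (if y \<le> h then survival_prob \<mu> m (n - 1) (unskip a j) (h - y) d else 0) \<partial>Exp \<mu>)"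
proof -
  define G where "G a t z = (if a = j then 0 else if t \<le> h \<and> h - t < z (unskip a j)
    \<and> num_departures m (n - 1) (h - t) z = d then 1 else 0 :: ennreal)" for a t z
  have j': "j \<in> {..<n}" and unskip: "a < k \<Longrightarrow> a \<noteq> j \<Longrightarrow> unskip a j < n - 1" for a
    using unskip_less[of j a k] j k by auto
  have "survival_prob \<mu> m n j h (Suc d) = (\<Sum>a<k. \<integral>\<^sup>+y. ennreal (exp (- (\<mu> * y))) ^ (k - 1) *
      (\<integral>\<^sup>+z. G a y z \<partial>PiM {..<n - 1} (\<lambda>_. Exp \<mu>)) \<partial>Exp \<mu>)"
    unfolding survival_prob_nn_integral[OF m j'[simplified]]
  proof (rule nn_integral_first_departure_recursion[OF \<mu> m n k])
    show "(\<lambda>s. if h < s j \<and> num_departures m n h s = Suc d then 1 else 0 :: ennreal)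
        \<in> borel_measurable (PiM {..<n} (\<lambda>_. Exp \<mu>))"
      using m j' by measurable
  next
    fix a assume "a < k"
    show "(\<lambda>(t, z). G a t z) \<in> borel_measurable (borel \<Otimes>\<^sub>M PiM {..<n - 1} (\<lambda>_. Exp \<mu>))"
    proof (cases "a = j")
      case False
      then have "unskip a j \<in> {..<n - 1}" using unskip \<open>a < k\<close> by simp
      then show ?thesis unfolding G_def using m False by measurable
    qed (simp add: G_def)
  next
    fix a s assume "first_departure m n k a s"
    then interpret first_departure m n k a s .
    show "(if h < s j \<and> num_departures m n h s = Suc d then 1 else 0) = G a (s a) (residual n k a s)"
      unfolding G_def num_departures_residual using residual_unskip[OF j] by (cases "a = j") auto
  qed
  also have "\<dots> = (\<Sum>a<k. if a = j then 0 else
    \<integral>\<^sup>+y. ennreal (exp (- (\<mu> * y))) ^ (k - 1) *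
      (if y \<le> h then survival_prob \<mu> m (n - 1) (unskip a j) (h - y) d else 0) \<partial>Exp \<mu>)"
    using nn_integral_survival_after[OF m unskip] by (intro sum.cong refl) (simp add: G_def)
  finally show ?thesis .
qed

lemma survival_prob_0:
  assumes "j < min n m"
  shows "survival_prob \<mu> m n j h 0 = departures_prob \<mu> m n h 0"
proof -
  have "h < s j" if "num_departures m n h s = 0" for s
  proof -
    from that have "\<not> departure m s j \<le> h"
      using assms unfolding num_departures_def by (subst (asm) card_0_eq) auto
    then show ?thesis using assms by (simp add: departure_initial)
  qed
  then show ?thesis
    unfolding survival_prob_def departures_prob_def by (intro arg_cong2[where f=emeasure] refl) blast
qed

lemma ennreal_exp_power_pos[simp]: "0 < ennreal (exp t) ^ n"
proof -
  have "ennreal (exp t) ^ n = ennreal (exp t ^ n)" by (rule ennreal_power) simp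
  then show ?thesis by simp
qed

lemma departures_prob_pos:
  assumes \<mu>: "\<mu> > 0" and m: "m \<ge> 1"
  shows "0 < h \<Longrightarrow> d \<le> n \<Longrightarrow> 0 < departures_prob \<mu> m n h d"
proof (induction n arbitrary: h d)
  case 0
  interpret prob_space "PiM {..<0} (\<lambda>_. Exp \<mu>)" by (rule prob_space_PiM_Exp[OF \<mu>])
  have "{s \<in> space (PiM {..<0} (\<lambda>_. Exp \<mu>)). num_departures m 0 h s = d} = space (PiM {..<0} (\<lambda>_. Exp \<mu>))"
    using 0 by (auto simp: num_departures_def)
  then show ?case unfolding departures_prob_def by (simp only: emeasure_space_1) simp
next
  case (Suc n)
  define k where "k = min (Suc n) m"
  have k: "k \<ge> 1" using m by (simp add: k_def)
  show ?case
  proof (cases d)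
    case 0
    have "0 < (\<integral>\<^sup>+y. ennreal (exp (- (\<mu> * y))) ^ (k - 1) * (if h < y then 1 else 0) \<partial>Exp \<mu>)"
      using Suc.prems by (intro nn_integral_Exp_pos[OF \<mu>, of h "h + 1"]) auto
    then show ?thesis
      using departures_prob_0[OF \<mu> m _ k_def] 0 k by (simp add: ennreal_zero_less_mult_iff)
  next
    case (Suc d')
    note [measurable] = borel_measurable_departures_after[OF \<mu> m]
    have "0 < (\<integral>\<^sup>+y. ennreal (exp (- (\<mu> * y))) ^ (k - 1) *
        (if y \<le> h then departures_prob \<mu> m n (h - y) d' else 0) \<partial>Exp \<mu>)"
    proof (rule nn_integral_Exp_pos[OF \<mu> order.refl \<open>0 < h\<close>])
      fix y assume "0 < y" "y < h"
      then have "0 < departures_prob \<mu> m n (h - y) d'"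
        using Suc.IH Suc.prems \<open>d = Suc d'\<close> by simp
      then show "0 < ennreal (exp (- (\<mu> * y))) ^ (k - 1) * (if y \<le> h then departures_prob \<mu> m n (h - y) d' else 0)"
        using \<open>y < h\<close> by (simp add: ennreal_zero_less_mult_iff)
    qed measurable
    then show ?thesis
      using departures_prob_Suc[OF \<mu> m _ k_def, unfolded diff_Suc_1] Suc k by (simp add: ennreal_zero_less_mult_iff)
  qed
qed

section \<open>The conditional survival probability\<close>

text \<open>Each departure frees one of the \<open>min n m\<close> busy servers, each with the same probability,
  so the tagged server survives it with probability \<open>(min n m - 1) / min n m\<close>.\<close>

fun survival_coeff :: "nat \<Rightarrow> nat \<Rightarrow> nat \<Rightarrow> real" where
  "survival_coeff m n 0 = 1"
| "survival_coeff m n (Suc d) = (real (min n m) - 1) / real (min n m) * survival_coeff m (n - 1) d"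

lemma survival_coeff_nonneg: "0 \<le> survival_coeff m n d"
proof (induction d arbitrary: n)
  case (Suc d)
  have "0 \<le> (real k - 1) / real k" for k :: nat by (cases k) auto
  then show ?case unfolding survival_coeff.simps using Suc.IH by (rule mult_nonneg_nonneg)
qed simp

lemma ennreal_survival_coeff_Suc:
  assumes "k = min (Suc n) m" and "k \<ge> 1"
  shows "ennreal (survival_coeff m (Suc n) (Suc d)) * of_nat k = of_nat (k - 1) * ennreal (survival_coeff m n d)"
proof -
  have "survival_coeff m (Suc n) (Suc d) * real k = real (k - 1) * survival_coeff m n d"
    using assms by (simp add: of_nat_diff)
  then show ?thesis using survival_coeff_nonneg
    by (metis ennreal_mult'' ennreal_of_nat_eq_real_of_nat of_nat_0_le_iff)
qed

lemma survival_prob_eq: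
  assumes \<mu>: "\<mu> > 0" and m: "m \<ge> 1"
  shows "j < min n m \<Longrightarrow> survival_prob \<mu> m n j h d = ennreal (survival_coeff m n d) * departures_prob \<mu> m n h d"
proof (induction n arbitrary: j h d)
  case (Suc n)
  define k where "k = min (Suc n) m"
  have jk: "j < k" and k: "k \<ge> 1" and n1: "Suc n \<ge> 1" using Suc.prems m by (auto simp: k_def)
  show ?case
  proof (cases d)
    case 0
    then show ?thesis using survival_prob_0[OF Suc.prems] by simp
  next
    case (Suc d')
    let ?c = "survival_coeff m n d'"
    define X where "X = (\<integral>\<^sup>+y. ennreal (exp (- (\<mu> * y))) ^ (k - 1) *
      (if y \<le> h then departures_prob \<mu> m n (h - y) d' else 0) \<partial>Exp \<mu>)"
    note [measurable] = borel_measurable_departures_after[OF \<mu> m]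
    have "survival_prob \<mu> m (Suc n) j h d = (\<Sum>a<k. if a = j then 0 else ennreal ?c * X)"
      unfolding Suc survival_prob_Suc[OF \<mu> m n1 k_def jk, unfolded diff_Suc_1]
    proof (intro sum.cong refl if_cong)
      fix a assume "a \<in> {..<k}" "a \<noteq> j"
      then have "unskip a j < min n m"
        using unskip_less[of j a k] jk by (auto simp: k_def)
      then have "(\<integral>\<^sup>+y. ennreal (exp (- (\<mu> * y))) ^ (k - 1) *
          (if y \<le> h then survival_prob \<mu> m n (unskip a j) (h - y) d' else 0) \<partial>Exp \<mu>)
        = (\<integral>\<^sup>+y. ennreal ?c * (ennreal (exp (- (\<mu> * y))) ^ (k - 1) *
          (if y \<le> h then departures_prob \<mu> m n (h - y) d' else 0)) \<partial>Exp \<mu>)"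
        using Suc.IH by (intro nn_integral_cong) (simp add: mult.left_commute)
      also have "\<dots> = ennreal ?c * X"
        unfolding X_def by (rule nn_integral_cmult) measurable
      finally show "(\<integral>\<^sup>+y. ennreal (exp (- (\<mu> * y))) ^ (k - 1) *
          (if y \<le> h then survival_prob \<mu> m n (unskip a j) (h - y) d' else 0) \<partial>Exp \<mu>) = ennreal ?c * X" .
    qed
    also have "\<dots> = (\<Sum>a\<in>{..<k} - {j}. ennreal ?c * X)"
      by (rule sum.mono_neutral_cong_right) auto
    also have "\<dots> = of_nat (k - 1) * (ennreal ?c * X)"
      using jk by simp
    also have "\<dots> = ennreal (survival_coeff m (Suc n) d) * (of_nat k * X)"
      using ennreal_survival_coeff_Suc[OF k_def k] by (simp add: Suc mult.assoc[symmetric])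
    also have "of_nat k * X = departures_prob \<mu> m (Suc n) h d"
      using departures_prob_Suc[OF \<mu> m _ k_def, unfolded diff_Suc_1] Suc by (simp add: X_def)
    finally show ?thesis .
  qed
qed simp

lemma survival_coeff_at_most_servers:
  "1 \<le> n \<Longrightarrow> n \<le> m \<Longrightarrow> d \<le> n \<Longrightarrow> survival_coeff m n d = (real n - real d) / real n"
proof (induction d arbitrary: n)
  case (Suc d)
  show ?case
  proof (cases "n = 1")
    case False
    then have "survival_coeff m (n - 1) d = (real (n - 1) - real d) / real (n - 1)"
      using Suc by simp
    then show ?thesis using Suc.prems False by (simp add: min_absorb1 of_nat_diff field_simps)
  qed (use Suc.prems in simp)
qed simp

lemma survival_coeff_more_customers:
  assumes "m \<ge> 1" "m < n" "d \<le> n"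
  shows "survival_coeff m n d = (if d \<le> n - m then ((real m - 1) / real m) ^ d
    else ((real m - 1) / real m) ^ (n - m) * ((real n - real d) / real m))"
  using assms(2,3)
proof (induction d arbitrary: n)
  case (Suc d)
  let ?q = "(real m - 1) / real m"
  have step: "survival_coeff m n (Suc d) = ?q * survival_coeff m (n - 1) d"
    using Suc.prems by (simp add: min_absorb2)
  show ?case
  proof (cases "m < n - 1")
    case True
    have "n - m = Suc (n - 1 - m)" using True by simp
    then have pow: "?q ^ (n - m) = ?q * ?q ^ (n - 1 - m)" by simp
    have IH: "survival_coeff m (n - 1) d = (if d \<le> n - 1 - m then ?q ^ d
        else ?q ^ (n - 1 - m) * ((real (n - 1) - real d) / real m))"
      using Suc.IH[of "n - 1"] True Suc.prems by simp
    show ?thesis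
    proof (cases "d \<le> n - 1 - m")
      case True
      then have "Suc d \<le> n - m" using \<open>m < n - 1\<close> by arith
      then show ?thesis using IH True unfolding step by simp
    next
      case False
      then have "\<not> Suc d \<le> n - m" "real (n - 1) - real d = real n - real (Suc d)"
        using Suc.prems by auto
      then show ?thesis using IH False unfolding step pow by simp
    qed
  next
    case False
    then have "n = Suc m" using Suc.prems by simp
    moreover have "survival_coeff m m d = (real m - real d) / real m"
      using survival_coeff_at_most_servers[of m m d] assms(1) Suc.prems \<open>n = Suc m\<close> by simp
    ultimately show ?thesis using step by (cases "d = 0") simp_all
  qed
qed simp

lemma survival_coeff_closed_form:
  assumes "m \<ge> 1" and "x \<ge> 1" and "d \<le> x"
  shows "(x \<le> m \<longrightarrow> survival_coeff m x d = (real x - real d) / real x)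
    \<and> (x \<ge> m + 1 \<longrightarrow>
         (d \<le> x - m \<longrightarrow> survival_coeff m x d = ((real m - 1) / real m) ^ d)
       \<and> (x - m \<le> d \<longrightarrow> survival_coeff m x d = ((real m - 1) / real m) ^ (x - m) * ((real x - real d) / real m)))"
proof (intro conjI impI)
  assume "x \<le> m"
  then show "survival_coeff m x d = (real x - real d) / real x"
    using survival_coeff_at_most_servers assms(2,3) by simp
next
  assume "m + 1 \<le> x" "d \<le> x - m"
  then show "survival_coeff m x d = ((real m - 1) / real m) ^ d"
    using survival_coeff_more_customers[OF assms(1) _ assms(3)] by simp
next
  assume "m + 1 \<le> x" "x - m \<le> d"
  moreover have "real x - real (x - m) = real m" using \<open>m + 1 \<le> x\<close> by simp
  ultimately show "survival_coeff m x d = ((real m - 1) / real m) ^ (x - m) * ((real x - real d) / real m)"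
    using survival_coeff_more_customers[OF assms(1) _ assms(3)] assms(1) by (cases "d = x - m") auto
qed

lemma (in prob_space) distr_indep_exponentials:
  fixes S :: "nat \<Rightarrow> 'a \<Rightarrow> real"
  assumes "x \<ge> 1" and indep: "indep_vars (\<lambda>_. borel) S {..<x}"
    and distributed: "\<And>i. i < x \<Longrightarrow> distributed M lborel (S i) (exponential_density \<mu>)"
  shows "distr M (PiM {..<x} (\<lambda>_. borel)) (\<lambda>\<omega>. \<lambda>i\<in>{..<x}. S i \<omega>) = PiM {..<x} (\<lambda>_. Exp \<mu>)"
proof -
  have rv: "random_variable borel (S i)" if "i \<in> {..<x}" for i
    using distributed_measurable[OF distributed] that by (simp add: measurable_cong_sets[OF refl sets_lborel])
  have "distr M borel (S i) = Exp \<mu>" if "i \<in> {..<x}" for i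
  proof -
    have "distr M borel (S i) = distr M lborel (S i)" by (rule distr_cong) auto
    also have "\<dots> = Exp \<mu>"
      using distributed_distr_eq_density[OF distributed[of i]] that by (simp add: Exp_def)
    finally show ?thesis .
  qed
  moreover have "{..<x} \<noteq> {}" using \<open>x \<ge> 1\<close> by (simp add: lessThan_empty_iff)
  ultimately show ?thesis
    using indep_vars_iff_distr_eq_PiM'[where I="{..<x}" and M'="\<lambda>_. borel" and X=S] rv indep by (auto intro: PiM_cong)
qed

lemma (in prob_space) prob_indep_exponentials:
  fixes S :: "nat \<Rightarrow> 'a \<Rightarrow> real"
  assumes "x \<ge> 1" and "indep_vars (\<lambda>_. borel) S {..<x}"
    and "\<And>i. i < x \<Longrightarrow> distributed M lborel (S i) (exponential_density \<mu>)"
    and A: "A \<in> sets (PiM {..<x} (\<lambda>_. Exp \<mu>))"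
  shows "prob ((\<lambda>\<omega>. \<lambda>i\<in>{..<x}. S i \<omega>) -` A \<inter> space M) = measure (PiM {..<x} (\<lambda>_. Exp \<mu>)) A"
proof -
  have "(\<lambda>\<omega>. \<lambda>i\<in>{..<x}. S i \<omega>) \<in> measurable M (PiM {..<x} (\<lambda>_. borel))"
    using distributed_measurable[OF assms(3)] by (intro measurable_restrict) (simp add: measurable_cong_sets[OF refl sets_lborel])
  moreover have "sets (PiM {..<x} (\<lambda>_. borel)) = sets (PiM {..<x} (\<lambda>_. Exp \<mu>))"
    by (rule sets_PiM_cong) auto
  ultimately show ?thesis
    using measure_distr distr_indep_exponentials[OF assms(1-3)] A by metis
qed

lemma cond_prob_survival:
  fixes M :: "'a measure" and S :: "nat \<Rightarrow> 'a \<Rightarrow> real"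
  assumes "prob_space M" and m: "m \<ge> 1" and \<mu>: "\<mu> > 0" and x: "x \<ge> 1" and h: "h > 0"
    and indep: "prob_space.indep_vars M (\<lambda>_. borel) S {..<x}"
    and distributed: "\<And>i. i < x \<Longrightarrow> distributed M lborel (S i) (exponential_density \<mu>)"
    and j: "j < min x m" and d: "d \<le> x"
  shows "cond_prob M (\<lambda>\<omega>. h < S j \<omega>) (\<lambda>\<omega>. num_departures m x h (\<lambda>i. S i \<omega>) = d)
    = survival_coeff m x d"
proof -
  interpret prob_space M by fact
  let ?Q = "PiM {..<x} (\<lambda>_. Exp \<mu>)" and ?X = "\<lambda>\<omega>. \<lambda>i\<in>{..<x}. S i \<omega>"
  interpret Q: prob_space ?Q by (rule prob_space_PiM_Exp[OF \<mu>])
  let ?D = "{s \<in> space ?Q. num_departures m x h s = d}"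
  let ?E = "{s \<in> space ?Q. h < s j \<and> num_departures m x h s = d}"
  have jx: "j \<in> {..<x}" using j by simp
  have sets: "?D \<in> sets ?Q" "?E \<in> sets ?Q" using m jx by measurable
  have X: "?X \<omega> \<in> space ?Q" "num_departures m x h (?X \<omega>) = num_departures m x h (\<lambda>i. S i \<omega>)" "?X \<omega> j = S j \<omega>" for \<omega>
    using jx by (auto simp: space_PiM intro: num_departures_cong)
  have "prob {\<omega> \<in> space M. num_departures m x h (\<lambda>i. S i \<omega>) = d} = prob (?X -` ?D \<inter> space M)"
    using X by (intro arg_cong[where f=prob]) auto
  also have "\<dots> = enn2real (departures_prob \<mu> m x h d)"
    using prob_indep_exponentials[OF x indep distributed sets(1)] by (simp add: departures_prob_def measure_def)
  finally have D: "prob {\<omega> \<in> space M. num_departures m x h (\<lambda>i. S i \<omega>) = d} = enn2real (departures_prob \<mu> m x h d)" .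
  have "prob {\<omega> \<in> space M. h < S j \<omega> \<and> num_departures m x h (\<lambda>i. S i \<omega>) = d} = prob (?X -` ?E \<inter> space M)"
    using X by (intro arg_cong[where f=prob]) auto
  also have "\<dots> = enn2real (survival_prob \<mu> m x j h d)"
    using prob_indep_exponentials[OF x indep distributed sets(2)] by (simp add: survival_prob_def measure_def)
  also have "\<dots> = survival_coeff m x d * enn2real (departures_prob \<mu> m x h d)"
    using survival_prob_eq[OF \<mu> m j] survival_coeff_nonneg by (simp add: enn2real_mult)
  finally have E: "prob {\<omega> \<in> space M. h < S j \<omega> \<and> num_departures m x h (\<lambda>i. S i \<omega>) = d}
      = survival_coeff m x d * enn2real (departures_prob \<mu> m x h d)" .
  have "departures_prob \<mu> m x h d = emeasure ?Q ?D" by (simp add: departures_prob_def)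
  then have "0 < enn2real (departures_prob \<mu> m x h d)"
    using departures_prob_pos[OF \<mu> m h d] by (simp add: Q.emeasure_eq_measure)
  then show ?thesis unfolding cond_prob_def D E by simp
qed

theorem lemma3:
  fixes M :: "'a measure" and S :: "nat \<Rightarrow> 'a \<Rightarrow> real"
    and m x j d :: nat and \<mu> h :: real
  assumes "prob_space M"
    and "m \<ge> 1" and "\<mu> > 0" and "x \<ge> 1" and "h > 0"
    and "prob_space.indep_vars M (\<lambda>_. borel) S {..<x}"
    and "\<And>i. i < x \<Longrightarrow> distributed M lborel (S i) (exponential_density \<mu>)"
    and "j < min x m"
    and "d \<le> x"
  shows "let P = cond_prob M (\<lambda>\<omega>. h < S j \<omega>)
                    (\<lambda>\<omega>. num_departures m x h (\<lambda>i. S i \<omega>) = d)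
         in (x \<le> m \<longrightarrow> P = (real x - real d) / real x)
          \<and> (x \<ge> m + 1 \<longrightarrow>
               (d \<le> x - m \<longrightarrow> P = ((real m - 1) / real m) ^ d)
             \<and> (x - m \<le> d \<longrightarrow> P = ((real m - 1) / real m) ^ (x - m) * ((real x - real d) / real m)))"
  using cond_prob_survival[OF assms] survival_coeff_closed_form[OF assms(2,4,9)] by (simp add: Let_def)

end
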